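(* Let $t_1,m_1,m_3,m_4\in\mathbb{R}$ with $m_3+im_4\neq 0$. Let $\mathfrak g$ be the real linear span of $E_1=\begin{pmatrix} t_1&2m_3-2im_4&-\frac{i}{2}(t_1m_1+2m_3^2+2m_4^2)&1\\0&0&0&0\\4i&0&2m_1&0\\0&0&0&0\end{pmatrix}$, $E_2=\begin{pmatrix}0&0&0&i\\0&0&0&0\\0&0&0&0\\0&0&0&0\end{pmatrix}$, $E_3=\begin{pmatrix}2m_3&-m_1&0&0\\0&m_3-im_4&0&1\\0&2i&2m_3&0\\0&0&0&0\end{pmatrix}$, $E_4=\begin{pmatrix}2m_4&im_1&0&0\\0&m_4+im_3&0&i\\0&2&2m_4&0\\0&0&0&0\end{pmatrix}$, $E_5=\begin{pmatrix}0&0&0&0\\0&0&0&0\\0&0&0&1\\0&0&0&0\end{pmatrix}$, and let $\mathfrak g^*$ be the real linear span of $E_1^*=\begin{pmatrix} t_1&0&-\frac{i}{2}(t_1m_1+2m_3^2+2m_4^2)&0\\0&0&0&0\\4i&0&2m_1&0\\0&0&0&0\end{pmatrix}$, $E_2^*=\begin{pmatrix}0&0&0&i\\0&0&0&0\\0&0&0&0\\0&0&0&0\end{pmatrix}$, $E_3^*=\mathrm{diag}(2,1,2,0)$, $E_4^*=\mathrm{diag}(0,i,0,0)$, $E_5^*=\begin{pmatrix}0&0&0&0\\0&0&0&0\\0&0&0&1\\0&0&0&0\end{pmatrix}$. Then $\mathfrak g$ and $\mathfrak g^*$ are similar: there is an invertible complex $4\times4$ matrix $C$ with $C^{-1}\mathfrak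 g\,C=\mathfrak g^*$.
   Context: All matrices are complex $4\times 4$; $\mathrm{diag}(a,b,c,d)$ denotes the diagonal matrix with those diagonal entries. *)

theory Defs
  imports "HOL-Analysis.Analysis"
begin

definition mat4 :: "complex list list \<Rightarrow> complex^4^4" where
  "mat4 rs = vector (map vector rs)"

definition E1 :: "real \<Rightarrow> real \<Rightarrow> real \<Rightarrow> real \<Rightarrow> complex^4^4" where
  "E1 t1 m1 m3 m4 = mat4
    [[of_real t1, 2 * of_real m3 - 2 * \<i> * of_real m4,
      - (\<i> / 2) * of_real (t1 * m1 + 2 * m3^2 + 2 * m4^2), 1],
     [0, 0, 0, 0],
     [4 * \<i>, 0, 2 * of_real m1, 0],
     [0, 0, 0, 0]]"

definition E2 :: "complex^4^4" where
  "E2 = mat4 [[0,0,0,\<i>],[0,0,0,0],[0,0,0,0],[0,0,0,0]]"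

definition E3 :: "real \<Rightarrow> real \<Rightarrow> real \<Rightarrow> complex^4^4" where
  "E3 m1 m3 m4 = mat4
    [[2 * of_real m3, - of_real m1, 0, 0],
     [0, of_real m3 - \<i> * of_real m4, 0, 1],
     [0, 2 * \<i>, 2 * of_real m3, 0],
     [0, 0, 0, 0]]"

definition E4 :: "real \<Rightarrow> real \<Rightarrow> real \<Rightarrow> complex^4^4" where
  "E4 m1 m3 m4 = mat4
    [[2 * of_real m4, \<i> * of_real m1, 0, 0],
     [0, of_real m4 + \<i> * of_real m3, 0, \<i>],
     [0, 2, 2 * of_real m4, 0],
     [0, 0, 0, 0]]"

definition E5 :: "complex^4^4" where
  "E5 = mat4 [[0,0,0,0],[0,0,0,0],[0,0,0,1],[0,0,0,0]]"

definition E1s :: "real \<Rightarrow> real \<Rightarrow> real \<Rightarrow> real \<Rightarrow> complex^4^4" where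
  "E1s t1 m1 m3 m4 = mat4
    [[of_real t1, 0, - (\<i> / 2) * of_real (t1 * m1 + 2 * m3^2 + 2 * m4^2), 0],
     [0, 0, 0, 0],
     [4 * \<i>, 0, 2 * of_real m1, 0],
     [0, 0, 0, 0]]"

definition E2s :: "complex^4^4" where
  "E2s = mat4 [[0,0,0,\<i>],[0,0,0,0],[0,0,0,0],[0,0,0,0]]"

definition E3s :: "complex^4^4" where
  "E3s = mat4 [[2,0,0,0],[0,1,0,0],[0,0,2,0],[0,0,0,0]]"

definition E4s :: "complex^4^4" where
  "E4s = mat4 [[0,0,0,0],[0,\<i>,0,0],[0,0,0,0],[0,0,0,0]]"

definition E5s :: "complex^4^4" where
  "E5s = mat4 [[0,0,0,0],[0,0,0,0],[0,0,0,1],[0,0,0,0]]"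

end

theory Submission
  imports Defs
begin

text \<open>
  A single unipotent matrix \<open>C\<close> does the job: it intertwines \<open>E\<^sub>1, E\<^sub>2, E\<^sub>5\<close> with
  \<open>E\<^sub>1\<^sup>*, E\<^sub>2\<^sup>*, E\<^sub>5\<^sup>*\<close>, while \<open>C\<^sup>-\<^sup>1E\<^sub>3C\<close> and \<open>C\<^sup>-\<^sup>1E\<^sub>4C\<close> arise from \<open>(E\<^sub>3\<^sup>*, E\<^sub>4\<^sup>*)\<close> by the
  rotation-dilation with matrix \<open>((m\<^sub>3, -m\<^sub>4), (m\<^sub>4, m\<^sub>3))\<close>, up to terms in the span of
  \<open>E\<^sub>2\<^sup>*, E\<^sub>5\<^sup>*\<close>. Since \<open>m\<^sub>3 + im\<^sub>4 \<noteq> 0\<close> this change of generators is invertible, and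
  conjugation is linear, so the two real spans correspond.
\<close>

lemma matrix_add_rdistrib:
  fixes A B :: "'a::semiring_1^'n^'m"
  shows "(A + B) ** C = A ** C + B ** C"
  by (vector matrix_matrix_mult_def sum.distrib[symmetric] field_simps)

lemma linear_matrix_conjugation:
  fixes D :: "'a::real_algebra_1^'n^'m" and C :: "'a^'p^'k"
  shows "linear (\<lambda>X. D ** X ** C)"
proof (rule linearI)
  fix X Y :: "'a^'k^'n" and r :: real
  show "D ** (X + Y) ** C = D ** X ** C + D ** Y ** C"
    by (simp add: matrix_add_ldistrib matrix_add_rdistrib)
  show "D ** (r *\<^sub>R X) ** C = r *\<^sub>R (D ** X ** C)"
    by (simp add: matrix_scalar_ac scalar_matrix_assoc)
qed

lemma matrix_inv:
  fixes C :: "'a::semiring_1^'n^'m"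
  assumes "invertible C"
  shows "C ** matrix_inv C = mat 1" and "matrix_inv C ** C = mat 1"
  using someI_ex[OF assms[unfolded invertible_def]] unfolding matrix_inv_def by blast+

lemma matrix_inv_conjugate_eqI:
  fixes C :: "'a::semiring_1^'n^'n"
  assumes "invertible C" and "C ** Y = X ** C"
  shows "matrix_inv C ** X ** C = Y"
proof -
  have "matrix_inv C ** X ** C = matrix_inv C ** (C ** Y)"
    using assms(2) by (simp add: matrix_mul_assoc)
  also have "\<dots> = Y"
    using matrix_inv(2)[OF assms(1)] by (simp add: matrix_mul_assoc)
  finally show ?thesis .
qed

lemma span_insert_rotation:
  fixes u v w\<^sub>1 w\<^sub>2 :: "'a::real_vector"
  assumes nz: "a\<^sup>2 + b\<^sup>2 \<noteq> 0" and w: "w\<^sub>1 \<in> span S" "w\<^sub>2 \<in> span S"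
  shows "span (insert (a *\<^sub>R u - b *\<^sub>R v + w\<^sub>1) (insert (b *\<^sub>R u + a *\<^sub>R v + w\<^sub>2) S))
       = span (insert u (insert v S))"
    (is "span (insert ?p (insert ?q S)) = span ?T")
proof (rule span_eq[THEN iffD2], rule conjI)
  have "S \<subseteq> span ?T"
    by (meson span_superset span_mono subset_insertI subset_trans)
  then have "w\<^sub>1 \<in> span ?T" "w\<^sub>2 \<in> span ?T"
    using w span_mono span_span by blast+
  then show "insert ?p (insert ?q S) \<subseteq> span ?T"
    using \<open>S \<subseteq> span ?T\<close>
    by (simp add: span_add span_diff span_scale span_base)
next
  let ?T' = "insert ?p (insert ?q S)"
  have "S \<subseteq> span ?T'"
    by (meson span_superset span_mono subset_insertI subset_trans)
  then have ws: "w\<^sub>1 \<in> span ?T'" "w\<^sub>2 \<in> span ?T'"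
    using w span_mono span_span by blast+
  define n where "n = a\<^sup>2 + b\<^sup>2"
  have pq: "?p \<in> span ?T'" "?q \<in> span ?T'"
    by (simp_all add: span_base)
  have "n *\<^sub>R u = a *\<^sub>R (?p - w\<^sub>1) + b *\<^sub>R (?q - w\<^sub>2)"
    "n *\<^sub>R v = a *\<^sub>R (?q - w\<^sub>2) - b *\<^sub>R (?p - w\<^sub>1)"
    by (simp_all add: n_def algebra_simps power2_eq_square)
  then have "n *\<^sub>R u \<in> span ?T'" "n *\<^sub>R v \<in> span ?T'"
    by (metis span_add span_diff span_scale pq ws)+
  then have "u \<in> span ?T'" "v \<in> span ?T'"
    using span_scale[of _ _ "inverse n"] nz unfolding n_def[symmetric] by force+
  then show "?T \<subseteq> span ?T'"
    using \<open>S \<subseteq> span ?T'\<close> by simp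
qed

lemma vector4_nth [simp]:
  "(vector [a, b, c, d] :: 'a::zero^4) $ 1 = a"
  "(vector [a, b, c, d] :: 'a::zero^4) $ 2 = b"
  "(vector [a, b, c, d] :: 'a::zero^4) $ 3 = c"
  "(vector [a, b, c, d] :: 'a::zero^4) $ 4 = d"
  unfolding vector_def by simp_all

lemma mat4_nth [simp]:
  "mat4 [r\<^sub>1, r\<^sub>2, r\<^sub>3, r\<^sub>4] $ 1 = vector r\<^sub>1"
  "mat4 [r\<^sub>1, r\<^sub>2, r\<^sub>3, r\<^sub>4] $ 2 = vector r\<^sub>2"
  "mat4 [r\<^sub>1, r\<^sub>2, r\<^sub>3, r\<^sub>4] $ 3 = vector r\<^sub>3"
  "mat4 [r\<^sub>1, r\<^sub>2, r\<^sub>3, r\<^sub>4] $ 4 = vector r\<^sub>4"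
  unfolding mat4_def by simp_all

lemma matrix_matrix_mult_4_nth:
  fixes A B :: "'a::semiring_1^4^4"
  shows "(A ** B) $ i $ j = A$i$1 * B$1$j + A$i$2 * B$2$j + A$i$3 * B$3$j + A$i$4 * B$4$j"
  by (simp add: matrix_matrix_mult_def sum_4)

lemma matrix_4_eq_iff:
  fixes A B :: "'a^4^4"
  shows "A = B \<longleftrightarrow> (\<forall>i j. A$i$j = B$i$j)"
  by (simp add: vec_eq_iff)

lemmas matrix_4_entrywise = matrix_4_eq_iff matrix_matrix_mult_4_nth forall_4

definition unipotent4 :: "complex \<Rightarrow> complex \<Rightarrow> complex \<Rightarrow> complex \<Rightarrow> complex \<Rightarrow> complex^4^4" where
  "unipotent4 a b c p q = mat4 [[1, a, 0, p], [0, 1, 0, c], [0, b, 1, q], [0, 0, 0, 1]]"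

lemma unipotent4_inverse:
  fixes a b c p q :: complex
  defines "C \<equiv> unipotent4 a b c p q" and "D \<equiv> unipotent4 (- a) (- b) (- c) (a * c - p) (b * c - q)"
  shows "C ** D = mat 1" "D ** C = mat 1"
  unfolding C_def D_def unipotent4_def matrix_4_entrywise by (simp_all add: mat_def)

definition conjugator :: "real \<Rightarrow> real \<Rightarrow> real \<Rightarrow> complex^4^4" where
  "conjugator m1 m3 m4 =
    (let z = of_real m3 + \<i> * of_real m4; n = of_real (m3\<^sup>2 + m4\<^sup>2) in
     unipotent4 (of_real m1 * cnj z / n) (- 2 * \<i> * cnj z / n) (- z / n) (- of_real m1 / (2 * n)) (\<i> / n))"

lemma conjugator_intertwines:
  fixes t1 m1 m3 m4 :: real
  assumes "m3\<^sup>2 + m4\<^sup>2 \<noteq> 0"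
  defines "C \<equiv> conjugator m1 m3 m4" and "n \<equiv> m3\<^sup>2 + m4\<^sup>2"
    and "W \<equiv> m1 *\<^sub>R E2s + 2 *\<^sub>R E5s"
  shows "C ** E1s t1 m1 m3 m4 = E1 t1 m1 m3 m4 ** C"
    and "C ** E2s = E2 ** C"
    and "C ** (m3 *\<^sub>R E3s - m4 *\<^sub>R E4s + (m4 / n) *\<^sub>R W) = E3 m1 m3 m4 ** C"
    and "C ** (m4 *\<^sub>R E3s + m3 *\<^sub>R E4s + (- m3 / n) *\<^sub>R W) = E4 m1 m3 m4 ** C"
    and "C ** E5s = E5 ** C"
proof -
  have "complex_of_real n \<noteq> 0"
    unfolding n_def of_real_eq_0_iff by (rule assms)
  have n_eq: "complex_of_real n = of_real m3 * of_real m3 + of_real m4 * of_real m4"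
    by (simp add: n_def power2_eq_square)
  note entrywise = C_def conjugator_def Let_def n_def[symmetric] unipotent4_def W_def
    E1_def E1s_def E2_def E2s_def E3_def E3s_def E4_def E4s_def E5_def E5s_def matrix_4_entrywise
  show "C ** E1s t1 m1 m3 m4 = E1 t1 m1 m3 m4 ** C"
    using \<open>of_real n \<noteq> 0\<close> unfolding entrywise
    by (simp add: field_simps; simp add: n_eq algebra_simps power2_eq_square)
  show "C ** E2s = E2 ** C" "C ** E5s = E5 ** C"
    unfolding entrywise by simp_all
  show "C ** (m3 *\<^sub>R E3s - m4 *\<^sub>R E4s + (m4 / n) *\<^sub>R W) = E3 m1 m3 m4 ** C"
    using \<open>of_real n \<noteq> 0\<close> unfolding entrywise
    by (simp add: field_simps; simp add: scaleR_conv_of_real field_simps; simp add: n_eq algebra_simps power2_eq_square)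
  show "C ** (m4 *\<^sub>R E3s + m3 *\<^sub>R E4s + (- m3 / n) *\<^sub>R W) = E4 m1 m3 m4 ** C"
    using \<open>of_real n \<noteq> 0\<close> unfolding entrywise
    by (simp add: field_simps; simp add: scaleR_conv_of_real field_simps; simp add: n_eq algebra_simps power2_eq_square)
qed

lemma invertible_conjugator: "invertible (conjugator m1 m3 m4)"
  unfolding invertible_def conjugator_def Let_def by (blast intro: unipotent4_inverse)

lemma conjugator_image_generators:
  fixes t1 m1 m3 m4 :: real
  assumes "m3\<^sup>2 + m4\<^sup>2 \<noteq> 0"
  defines "C \<equiv> conjugator m1 m3 m4" and "n \<equiv> m3\<^sup>2 + m4\<^sup>2"
    and "W \<equiv> m1 *\<^sub>R E2s + 2 *\<^sub>R E5s"
  shows "(\<lambda>X. matrix_inv C ** X ** C) ` {E1 t1 m1 m3 m4, E2, E3 m1 m3 m4, E4 m1 m3 m4, E5}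
       = insert (m3 *\<^sub>R E3s - m4 *\<^sub>R E4s + (m4 / n) *\<^sub>R W)
           (insert (m4 *\<^sub>R E3s + m3 *\<^sub>R E4s + (- m3 / n) *\<^sub>R W) {E1s t1 m1 m3 m4, E2s, E5s})"
  using conjugator_intertwines[OF assms(1), THEN matrix_inv_conjugate_eqI[OF invertible_conjugator]]
  unfolding C_def n_def W_def by auto

theorem proposition4p1:
  fixes t1 m1 m3 m4 :: real
  assumes "Complex m3 m4 \<noteq> 0"
  shows "\<exists>C :: complex^4^4. invertible C \<and>
    (\<lambda>X. matrix_inv C ** X ** C) `
      span {E1 t1 m1 m3 m4, E2, E3 m1 m3 m4, E4 m1 m3 m4, E5}
    = span {E1s t1 m1 m3 m4, E2s, E3s, E4s, E5s}"
proof (intro exI conjI)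
  define n where "n = m3\<^sup>2 + m4\<^sup>2"
  define W where "W = m1 *\<^sub>R E2s + 2 *\<^sub>R E5s"
  define S where "S = {E1s t1 m1 m3 m4, E2s, E5s}"
  have "n \<noteq> 0"
    using assms by (simp add: n_def complex_eq_iff)
  have "W \<in> span S"
    unfolding W_def S_def by (simp add: span_add span_scale span_base)
  let ?conj = "\<lambda>X. matrix_inv (conjugator m1 m3 m4) ** X ** conjugator m1 m3 m4"
  have "?conj ` span {E1 t1 m1 m3 m4, E2, E3 m1 m3 m4, E4 m1 m3 m4, E5}
      = span (insert (m3 *\<^sub>R E3s - m4 *\<^sub>R E4s + (m4 / n) *\<^sub>R W)
                (insert (m4 *\<^sub>R E3s + m3 *\<^sub>R E4s + (- m3 / n) *\<^sub>R W) S))"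
    using conjugator_image_generators[of m3 m4 m1 t1] \<open>n \<noteq> 0\<close>
    unfolding n_def W_def S_def by (simp flip: span_linear_image[OF linear_matrix_conjugation])
  also have "\<dots> = span (insert E3s (insert E4s S))"
    using \<open>n \<noteq> 0\<close> \<open>W \<in> span S\<close> unfolding n_def
    by (intro span_insert_rotation span_scale)
  also have "\<dots> = span {E1s t1 m1 m3 m4, E2s, E3s, E4s, E5s}"
    by (simp add: S_def insert_commute)
  finally show "?conj ` span {E1 t1 m1 m3 m4, E2, E3 m1 m3 m4, E4 m1 m3 m4, E5}
      = span {E1s t1 m1 m3 m4, E2s, E3s, E4s, E5s}" .
qed (rule invertible_conjugator)

end
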